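(* Let $\bar b>0$, $0<\epsilon<1$, and suppose $w/6\le \bar w\le 6w$. Then for every edge $e$, the expected number of queries and the expected running time of $\mathrm{Heavy}(e,\bar b,\bar w,\epsilon,m)$ are $O\!\left(\frac{\bar w\sqrt m}{\bar b}\cdot \mathrm{poly}(\log n,1/\epsilon)\right)$.
   Context: Let $G=(V,E)$ be a bipartite graph with bipartition $V=U\cup L$, $n=|V|$, $m=|E|$; $N(v)$ is the neighbor set and $d_v=|N(v)|$ the degree of $v$; for an edge $e=(u,v)$, $d_e=d_u+d_v-2$; $w$ is the number of wedges (paths with two edges) in $G$. A butterfly is a set of four distinct vertices $\{u_1,u_2,v_1,v_2\}$, $u_i\in U$, $v_i\in L$, with all four pairs $u_iv_j$ edges. Fix an arbitrary order $\pi$ of $V$ and write $x\prec z$ if $d_x<d_z$, or $d_x=d_z$ and $x$ precedes $z$ in $\pi$. Access to $G$ is via degree queries, neighbor queries (the $i$-th neighbor of $v$), vertex-pair queries and uniform edge sampling, each costing one query. Procedure $\mathrm{Heavy}(e=(u,v),\bar b,\bar w,\epsilon,m)$: if $\bar w<(\epsilon\bar b)^{1/4}d_e$, return heavy. Otherwise, for $i=1,\dots,t=48\log(2m)$: for $j=1,\dots,s=12\sqrt m\,\bar w/(\epsilon^2\bar b)$: choose $p\in\{u,v\}$ with probability $(d_p-1)/d_e$, let $q$ be the other endpoint of $e$, choose $x_j$ uniformly from $N(p)\setminus\{q\}$ (wedge $(q,p,x_j)$); let $y_j$ be the one of $q,x_j$ with smaller degree; set $R=\lceil d_{y_j}/\sqrt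 m\rceil$; for $k=1,\dots,R$ sample $z$ uniformly from $N(y_j)$ and set $Z_k=d_{y_j}$ if $\{q,p,x_j,z\}$ is a butterfly and $x_j\prec z$, else $Z_k=0$; set $Y_j=\frac1R\sum_kZ_k$. Set $X_i=\frac1s\sum_jY_j$. Return heavy if the median $X$ of the $X_i$ exceeds $\bar b^{3/4}/\epsilon^{1/4}$, light otherwise. *)

theory Defs
  imports "HOL-Probability.Probability"
begin

definition bipartite_graph :: "'v set \<Rightarrow> 'v set \<Rightarrow> 'v set \<Rightarrow> 'v set set \<Rightarrow> bool" where
  "bipartite_graph V U L E \<longleftrightarrow> finite V \<and> U \<union> L = V \<and> U \<inter> L = {} \<and>
     (\<forall>e\<in>E. \<exists>a\<in>U. \<exists>b\<in>L. e = {a, b})"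

definition nbrs :: "'v set set \<Rightarrow> 'v \<Rightarrow> 'v set" where
  "nbrs E x = {y. {x, y} \<in> E}"

definition deg :: "'v set set \<Rightarrow> 'v \<Rightarrow> nat" where
  "deg E x = card (nbrs E x)"

definition wedges :: "'v set \<Rightarrow> 'v set set \<Rightarrow> nat" where
  "wedges V E = (\<Sum>x\<in>V. deg E x choose 2)"

definition is_butterfly :: "'v set \<Rightarrow> 'v set \<Rightarrow> 'v set set \<Rightarrow> 'v set \<Rightarrow> bool" where
  "is_butterfly U L E S \<longleftrightarrow> (\<exists>u1 u2 v1 v2. S = {u1, u2, v1, v2} \<and> u1 \<noteq> u2 \<and> v1 \<noteq> v2 \<and>
     u1 \<in> U \<and> u2 \<in> U \<and> v1 \<in> L \<and> v2 \<in> L \<and>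
     {u1, v1} \<in> E \<and> {u1, v2} \<in> E \<and> {u2, v1} \<in> E \<and> {u2, v2} \<in> E)"

text \<open>The order x \<prec> z, with the arbitrary order \<rk> of V given by an injective ranking rk.\<close>
definition prec :: "'v set set \<Rightarrow> ('v \<Rightarrow> nat) \<Rightarrow> 'v \<Rightarrow> 'v \<Rightarrow> bool" where
  "prec E rk x z \<longleftrightarrow> deg E x < deg E z \<or> (deg E x = deg E z \<and> rk x < rk z)"

text \<open>Every random step yields a triple (value, number of queries, running time).\<close>

fun iter_pmf :: "nat \<Rightarrow> 'a pmf \<Rightarrow> 'a list pmf" where
  "iter_pmf 0 p = return_pmf []"
| "iter_pmf (Suc k) p = bind_pmf p (\<lambda>x. map_pmf (Cons x) (iter_pmf k p))"

definition sum_q :: "('a \<times> nat \<times> nat) list \<Rightarrow> nat" where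
  "sum_q xs = sum_list (map (\<lambda>(_, q, _). q) xs)"

definition sum_t :: "('a \<times> nat \<times> nat) list \<Rightarrow> nat" where
  "sum_t xs = sum_list (map (\<lambda>(_, _, t). t) xs)"

definition median :: "real list \<Rightarrow> real" where
  "median xs = sort xs ! (length xs div 2)"

text \<open>One sample Z_k: a neighbor query for z, a degree query for d_z and a vertex-pair
  query (adjacency of z to the other vertex of {q, x}): 3 queries, 1 unit of time.\<close>
definition Z_sample :: "'v set \<Rightarrow> 'v set \<Rightarrow> 'v set set \<Rightarrow> ('v \<Rightarrow> nat) \<Rightarrow>
    'v \<Rightarrow> 'v \<Rightarrow> 'v \<Rightarrow> 'v \<Rightarrow> (real \<times> nat \<times> nat) pmf" where
  "Z_sample U L E rk q p x y =
     map_pmf (\<lambda>z. (if is_butterfly U L E {q, p, x, z} \<and> prec E rk x z then real (deg E y) else 0,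
                    3, 1))
       (pmf_of_set (nbrs E y))"

text \<open>One sample Y_j for the edge e = (u,v): a neighbor query for x_j and a degree query for
  d_{x_j} (2 queries), then R samples Z_k.\<close>
definition Y_sample :: "'v set \<Rightarrow> 'v set \<Rightarrow> 'v set set \<Rightarrow> ('v \<Rightarrow> nat) \<Rightarrow> nat \<Rightarrow>
    'v \<Rightarrow> 'v \<Rightarrow> (real \<times> nat \<times> nat) pmf" where
  "Y_sample U L E rk m u v =
    (let de = deg E u + deg E v - 2 in
     if de = 0 then return_pmf (0, 0, 1) else
     bind_pmf (bernoulli_pmf (real (deg E u - 1) / real de)) (\<lambda>b.
       let p = (if b then u else v); q = (if b then v else u) in
       if nbrs E p - {q} = {} then return_pmf (0, 0, 1) else
       bind_pmf (pmf_of_set (nbrs E p - {q})) (\<lambda>x.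
         let y = (if deg E x < deg E q then x else q);
             R = nat \<lceil>real (deg E y) / sqrt (real m)\<rceil> in
         map_pmf (\<lambda>zs. (sum_list (map fst zs) / real R, 2 + sum_q zs, 1 + sum_t zs))
           (iter_pmf R (Z_sample U L E rk q p x y)))))"

definition X_sample :: "'v set \<Rightarrow> 'v set \<Rightarrow> 'v set set \<Rightarrow> ('v \<Rightarrow> nat) \<Rightarrow> nat \<Rightarrow> nat \<Rightarrow>
    'v \<Rightarrow> 'v \<Rightarrow> (real \<times> nat \<times> nat) pmf" where
  "X_sample U L E rk m s u v =
     map_pmf (\<lambda>ys. (sum_list (map fst ys) / real s, sum_q ys, 1 + sum_t ys))
       (iter_pmf s (Y_sample U L E rk m u v))"

text \<open>Heavy(e=(u,v), bbar, wbar, eps, m): returns (True = heavy / False = light,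
  number of queries, running time).  Two degree queries for d_u, d_v; the median of t values
  is charged t units of time.\<close>
definition Heavy :: "'v set \<Rightarrow> 'v set \<Rightarrow> 'v set set \<Rightarrow> ('v \<Rightarrow> nat) \<Rightarrow>
    'v \<Rightarrow> 'v \<Rightarrow> real \<Rightarrow> real \<Rightarrow> real \<Rightarrow> nat \<Rightarrow> (bool \<times> nat \<times> nat) pmf" where
  "Heavy U L E rk u v bbar wbar eps m =
    (let de = deg E u + deg E v - 2 in
     if wbar < (eps * bbar) powr (1/4) * real de then return_pmf (True, 2, 1) else
     (let t = nat \<lceil>48 * log 2 (2 * real m)\<rceil>;
          s = nat \<lceil>12 * sqrt (real m) * wbar / (eps ^ 2 * bbar)\<rceil> in
      map_pmf (\<lambda>xs. (median (map fst xs) > bbar powr (3/4) / eps powr (1/4),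
                      2 + sum_q xs, 1 + t + sum_t xs))
        (iter_pmf t (X_sample U L E rk m s u v))))"

end

theory Submission
  imports Defs "HOL-Analysis.Harmonic_Numbers"
begin

(* Charge every query and every unit of time to one cost, queries + time; expected costs simply
   add up along the sequential sampling.  A sample Y picks a wedge (q, p, x) through e uniformly,
   as the Bernoulli weight (d_p - 1)/d_e cancels the uniform choice of x in N(p) - {q}, and then
   draws R = ceil(min(d_x, d_q)/sqrt m) samples Z of constant cost.  Over the wedges with center p,
   the sum of min(d_x, d_q) is at most m, since no edge joins two neighbours of p, and at most
   (d_p - 1) d_q; hence it is at most sqrt m * d_e, and Y has constant expected cost.  Heavy
   takes t = O(log n) estimates X, each the mean of s = O(sqrt m wbar / (eps^2 bbar)) samples Y. *)

definition cost :: "'a \<times> nat \<times> nat \<Rightarrow> real" where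
  "cost = (\<lambda>(_, q, t). real q + real t)"

lemma cost_Pair [simp]: "cost (x, q, t) = real q + real t"
  by (simp add: cost_def)

lemma sum_list_map_cost: "sum_list (map cost xs) = real (sum_q xs) + real (sum_t xs)"
  by (induction xs) (auto simp: sum_q_def sum_t_def cost_def)

lemma finite_set_iter_pmf: "finite (set_pmf p) \<Longrightarrow> finite (set_pmf (iter_pmf k p))"
  by (induction k) auto

lemma expectation_iter_pmf_sum_list:
  fixes f :: "'a \<Rightarrow> real"
  assumes fin: "finite (set_pmf p)"
  shows "measure_pmf.expectation (iter_pmf k p) (\<lambda>xs. c + sum_list (map f xs)) =
    c + real k * measure_pmf.expectation p f"
proof (induction k arbitrary: c)
  case 0
  then show ?case by simp
next
  case (Suc k)
  have "measure_pmf.expectation (iter_pmf (Suc k) p) (\<lambda>xs. c + sum_list (map f xs)) =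
      (\<Sum>a\<in>set_pmf p. pmf p a * (c + f a + real k * measure_pmf.expectation p f))"
    by (subst iter_pmf.simps, subst pmf_expectation_bind[OF fin])
      (auto simp: finite_set_iter_pmf[OF fin] add.assoc Suc.IH[symmetric])
  also have "\<dots> = (c + real k * measure_pmf.expectation p f) * (\<Sum>a\<in>set_pmf p. pmf p a)
      + (\<Sum>a\<in>set_pmf p. pmf p a * f a)"
    by (simp add: algebra_simps sum.distrib sum_distrib_left sum_distrib_right)
  also have "(\<Sum>a\<in>set_pmf p. pmf p a) = 1"
    using fin by (rule sum_pmf_eq_1) simp
  also have "(\<Sum>a\<in>set_pmf p. pmf p a * f a) = measure_pmf.expectation p f"
    by (subst integral_measure_pmf[OF fin]) auto
  finally show ?case by (simp add: algebra_simps)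
qed

lemma expected_cost_iter_pmf:
  assumes "finite (set_pmf p)" and "\<And>xs. cost (g xs) = c + sum_list (map cost xs)"
  shows "measure_pmf.expectation (map_pmf g (iter_pmf k p)) cost =
    c + real k * measure_pmf.expectation p cost"
  using assms by (simp add: expectation_iter_pmf_sum_list)

lemma bipartite_graph_edgeD:
  assumes "bipartite_graph V U L E" "{a, b} \<in> E"
  shows "(a \<in> U \<and> b \<in> L \<or> a \<in> L \<and> b \<in> U) \<and> a \<in> V \<and> b \<in> V"
proof -
  obtain c d where "c \<in> U" "d \<in> L" "{a, b} = {c, d}"
    using assms unfolding bipartite_graph_def by blast
  moreover have "U \<union> L = V" using assms unfolding bipartite_graph_def by auto
  ultimately show ?thesis by (auto simp: doubleton_eq_iff)
qed

lemma edges_subset_doubletons: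
  assumes "bipartite_graph V U L E"
  shows "E \<subseteq> (\<lambda>(a, b). {a, b}) ` (V \<times> V)"
  using assms unfolding bipartite_graph_def by fast

lemma finite_edges:
  assumes "bipartite_graph V U L E"
  shows "finite E"
proof (rule finite_subset[OF edges_subset_doubletons[OF assms]])
  show "finite ((\<lambda>(a, b). {a, b}) ` (V \<times> V))" using assms by (simp add: bipartite_graph_def)
qed

lemma card_edges_le:
  assumes "bipartite_graph V U L E"
  shows "card E \<le> card V ^ 2"
proof -
  have "finite V" using assms by (simp add: bipartite_graph_def)
  then have "card E \<le> card ((\<lambda>(a, b). {a, b}) ` (V \<times> V))"
    using edges_subset_doubletons[OF assms] by (intro card_mono) auto
  also have "\<dots> \<le> card (V \<times> V)" by (rule card_image_le) (use \<open>finite V\<close> in simp)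
  finally show ?thesis by (simp add: card_cartesian_product power2_eq_square)
qed

lemma finite_nbrs:
  assumes "bipartite_graph V U L E"
  shows "finite (nbrs E x)"
proof (rule finite_subset)
  show "nbrs E x \<subseteq> V" using bipartite_graph_edgeD[OF assms] by (auto simp: nbrs_def)
  show "finite V" using assms by (simp add: bipartite_graph_def)
qed

lemma card_nbrs_Diff: "{p, q} \<in> E \<Longrightarrow> card (nbrs E p - {q}) = deg E p - 1"
  by (simp add: deg_def nbrs_def card_Diff_singleton)

lemma deg_pos:
  assumes "bipartite_graph V U L E" "{p, q} \<in> E"
  shows "0 < deg E p"
  using finite_nbrs[OF assms(1), of p] assms(2) by (auto simp: deg_def nbrs_def card_gt_0_iff)

lemma card_edges_pos: "bipartite_graph V U L E \<Longrightarrow> {u, v} \<in> E \<Longrightarrow> 0 < card E"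
  using finite_edges card_gt_0_iff by blast

lemma sum_deg_nbrs_le_card_edges:
  assumes b: "bipartite_graph V U L E"
  shows "(\<Sum>x\<in>nbrs E p. deg E x) \<le> card E"
proof -
  have "(\<Sum>x\<in>nbrs E p. deg E x) = card (Sigma (nbrs E p) (nbrs E))"
    unfolding deg_def by (rule card_SigmaI[symmetric]) (use finite_nbrs[OF b] in auto)
  also have "\<dots> \<le> card E"
  proof (rule card_inj_on_le[where f = "\<lambda>(x, y). {x, y}"])
    show "inj_on (\<lambda>(x, y). {x, y}) (Sigma (nbrs E p) (nbrs E))"
    proof (rule inj_onI, clarify)
      fix x y x' y'
      assume h: "x \<in> nbrs E p" "y \<in> nbrs E x" "x' \<in> nbrs E p" "y' \<in> nbrs E x'"
        and eq: "{x, y} = {x', y'}"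
      have "{x, x'} \<notin> E"
        using h bipartite_graph_edgeD[OF b, of x x'] bipartite_graph_edgeD[OF b, of p x]
          bipartite_graph_edgeD[OF b, of p x'] b
        unfolding nbrs_def bipartite_graph_def by blast
      then show "x = x' \<and> y = y'" using h eq by (auto simp: nbrs_def doubleton_eq_iff insert_commute)
    qed
    show "(\<lambda>(x, y). {x, y}) ` Sigma (nbrs E p) (nbrs E) \<subseteq> E"
      by (auto simp: nbrs_def)
  qed (rule finite_edges[OF b])
  finally show ?thesis .
qed

lemma min_square_mult_le:
  fixes r b :: real
  assumes "1 \<le> r" "0 \<le> b"
  shows "min (r\<^sup>2) (real a * (b + 1)) \<le> r * (real a + b)"
proof (cases "r \<le> real a + b")
  case True
  then have "r\<^sup>2 \<le> r * (real a + b)" using assms by (simp add: power2_eq_square)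
  then show ?thesis by linarith
next
  case False
  have "real a * (b + 1) \<le> r * (real a + b)"
  proof (cases "a = 0")
    case False
    then have "real a * (b + 1) \<le> real a * b + r * 1" using \<open>\<not> r \<le> real a + b\<close> assms
      by (simp add: algebra_simps)
    also have "\<dots> \<le> r * b + r * real a" using False assms \<open>\<not> r \<le> real a + b\<close>
      by (intro add_mono mult_right_mono mult_left_mono) auto
    finally show ?thesis by (simp add: algebra_simps)
  qed (use assms in simp)
  then show ?thesis by linarith
qed

definition Z_rounds :: "'v set set \<Rightarrow> nat \<Rightarrow> 'v \<Rightarrow> 'v \<Rightarrow> nat" where
  "Z_rounds E m q x = nat \<lceil>real (min (deg E x) (deg E q)) / sqrt (real m)\<rceil>"

definition Y_from_wedge :: "'v set \<Rightarrow> 'v set \<Rightarrow> 'v set set \<Rightarrow> ('v \<Rightarrow> nat) \<Rightarrow> nat \<Rightarrow>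
    'v \<Rightarrow> 'v \<Rightarrow> 'v \<Rightarrow> (real \<times> nat \<times> nat) pmf" where
  "Y_from_wedge U L E rk m q p x =
     (let y = (if deg E x < deg E q then x else q);
          R = nat \<lceil>real (deg E y) / sqrt (real m)\<rceil> in
      map_pmf (\<lambda>zs. (sum_list (map fst zs) / real R, 2 + sum_q zs, 1 + sum_t zs))
        (iter_pmf R (Z_sample U L E rk q p x y)))"

definition Y_from_center :: "'v set \<Rightarrow> 'v set \<Rightarrow> 'v set set \<Rightarrow> ('v \<Rightarrow> nat) \<Rightarrow> nat \<Rightarrow>
    'v \<Rightarrow> 'v \<Rightarrow> (real \<times> nat \<times> nat) pmf" where
  "Y_from_center U L E rk m p q =
     (if nbrs E p - {q} = {} then return_pmf (0, 0, 1)
      else bind_pmf (pmf_of_set (nbrs E p - {q})) (Y_from_wedge U L E rk m q p))"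

lemma Y_sample_eq:
  "Y_sample U L E rk m u v =
    (if deg E u + deg E v - 2 = 0 then return_pmf (0, 0, 1) else
     bind_pmf (bernoulli_pmf (real (deg E u - 1) / real (deg E u + deg E v - 2)))
       (\<lambda>b. if b then Y_from_center U L E rk m u v else Y_from_center U L E rk m v u))"
  unfolding Y_sample_def Y_from_center_def Y_from_wedge_def Let_def
  by (rule if_cong[OF refl refl], rule bind_pmf_cong[OF refl]) simp

lemma finite_set_Z_sample: "finite (set_pmf (Z_sample U L E rk q p x y))"
proof (rule finite_subset)
  show "set_pmf (Z_sample U L E rk q p x y) \<subseteq> {(real (deg E y), 3, 1), (0, 3, 1)}"
    unfolding Z_sample_def by auto
qed simp

lemma finite_set_Y_from_wedge: "finite (set_pmf (Y_from_wedge U L E rk m q p x))"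
  by (simp add: Y_from_wedge_def Let_def finite_set_iter_pmf finite_set_Z_sample)

lemma finite_set_Y_from_center:
  "bipartite_graph V U L E \<Longrightarrow> finite (set_pmf (Y_from_center U L E rk m p q))"
  by (simp add: Y_from_center_def finite_nbrs finite_set_Y_from_wedge)

lemma finite_set_Y_sample:
  "bipartite_graph V U L E \<Longrightarrow> finite (set_pmf (Y_sample U L E rk m u v))"
  by (simp add: Y_sample_eq finite_set_Y_from_center)

lemma finite_set_X_sample:
  "bipartite_graph V U L E \<Longrightarrow> finite (set_pmf (X_sample U L E rk m s u v))"
  by (simp add: X_sample_def finite_set_iter_pmf finite_set_Y_sample)

lemma finite_set_Heavy:
  "bipartite_graph V U L E \<Longrightarrow> finite (set_pmf (Heavy U L E rk u v bbar wbar eps m))"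
  by (simp add: Heavy_def Let_def finite_set_iter_pmf finite_set_X_sample)

lemma expected_cost_Z_sample: "measure_pmf.expectation (Z_sample U L E rk q p x y) cost = 4"
  by (simp add: Z_sample_def)

lemma expected_cost_Y_from_wedge:
  "measure_pmf.expectation (Y_from_wedge U L E rk m q p x) cost = 3 + 4 * real (Z_rounds E m q x)"
  unfolding Y_from_wedge_def Let_def
  by (subst expected_cost_iter_pmf[OF finite_set_Z_sample, where c = 3])
    (simp_all add: sum_list_map_cost expected_cost_Z_sample Z_rounds_def min_def)

lemma expected_cost_Y_from_center:
  assumes b: "bipartite_graph V U L E" and e: "{p, q} \<in> E"
  shows "real (deg E p - 1) * measure_pmf.expectation (Y_from_center U L E rk m p q) cost =
    (\<Sum>x\<in>nbrs E p - {q}. 3 + 4 * real (Z_rounds E m q x))"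
proof (cases "nbrs E p - {q} = {}")
  case True
  then have "deg E p - 1 = 0" using card_nbrs_Diff[OF e] by (metis card.empty)
  then show ?thesis by (simp only: True sum.empty of_nat_0 mult_zero_left)
next
  case False
  have "measure_pmf.expectation (Y_from_center U L E rk m p q) cost =
      (\<Sum>x\<in>nbrs E p - {q}. 3 + 4 * real (Z_rounds E m q x)) / real (card (nbrs E p - {q}))"
    using False finite_nbrs[OF b]
    by (simp add: Y_from_center_def pmf_expectation_bind_pmf_of_set finite_set_Y_from_wedge
        expected_cost_Y_from_wedge divide_inverse_commute sum_distrib_left)
  moreover have "card (nbrs E p - {q}) = deg E p - 1" "card (nbrs E p - {q}) \<noteq> 0"
    using False card_nbrs_Diff[OF e] finite_nbrs[OF b] by auto
  ultimately show ?thesis by simp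
qed

lemma sum_min_deg_le:
  assumes b: "bipartite_graph V U L E" and e: "{p, q} \<in> E"
  shows "(\<Sum>x\<in>nbrs E p - {q}. real (min (deg E x) (deg E q)))
    \<le> sqrt (real (card E)) * real (deg E p + deg E q - 2)"
proof -
  have e': "{q, p} \<in> E" using e by (simp add: insert_commute)
  let ?S = "\<Sum>x\<in>nbrs E p - {q}. real (min (deg E x) (deg E q))"
  have "?S \<le> (\<Sum>x\<in>nbrs E p - {q}. real (deg E x))"
    by (intro sum_mono) simp
  also have "\<dots> \<le> (\<Sum>x\<in>nbrs E p. real (deg E x))"
    using finite_nbrs[OF b] by (intro sum_mono2) auto
  also have "\<dots> \<le> (sqrt (real (card E)))\<^sup>2"
    using sum_deg_nbrs_le_card_edges[OF b, of p] by (simp flip: of_nat_sum)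
  finally have by_edges: "?S \<le> (sqrt (real (card E)))\<^sup>2" .
  have "?S \<le> real (card (nbrs E p - {q})) * real (deg E q)"
    by (rule sum_bounded_above) simp
  then have by_degree: "?S \<le> real (deg E p - 1) * (real (deg E q - 1) + 1)"
    using card_nbrs_Diff[OF e] deg_pos[OF b e'] by (simp add: of_nat_diff)
  have "1 \<le> card E" using card_edges_pos[OF b e] by simp
  then have "?S \<le> sqrt (real (card E)) * (real (deg E p - 1) + real (deg E q - 1))"
    using min_square_mult_le[of "sqrt (real (card E))" "real (deg E q - 1)" "deg E p - 1"]
      by_edges by_degree by simp
  also have "real (deg E p - 1) + real (deg E q - 1) = real (deg E p + deg E q - 2)"
    using deg_pos[OF b e] deg_pos[OF b e'] by (simp add: of_nat_diff)
  finally show ?thesis .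
qed

lemma sum_Z_rounds_le:
  assumes b: "bipartite_graph V U L E" and e: "{p, q} \<in> E"
  shows "(\<Sum>x\<in>nbrs E p - {q}. real (Z_rounds E (card E) q x))
    \<le> real (deg E p - 1) + real (deg E p + deg E q - 2)"
proof -
  define r where "r = sqrt (real (card E))"
  have "r > 0" using card_edges_pos[OF b e] by (simp add: r_def)
  have "(\<Sum>x\<in>nbrs E p - {q}. real (Z_rounds E (card E) q x))
      \<le> (\<Sum>x\<in>nbrs E p - {q}. real (min (deg E x) (deg E q)) / r + 1)"
    unfolding Z_rounds_def r_def[symmetric]
    using \<open>r > 0\<close> by (intro sum_mono) (simp add: of_int_ceiling_le_add_one)
  also have "\<dots> = (\<Sum>x\<in>nbrs E p - {q}. real (min (deg E x) (deg E q))) / r + real (deg E p - 1)"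
    using card_nbrs_Diff[OF e] by (simp add: sum.distrib sum_divide_distrib)
  also have "\<dots> \<le> real (deg E p + deg E q - 2) + real (deg E p - 1)"
    using sum_min_deg_le[OF b e] \<open>r > 0\<close> by (simp add: r_def divide_le_eq mult.commute)
  finally show ?thesis by simp
qed

lemma weighted_expected_cost_Y_from_center_le:
  assumes b: "bipartite_graph V U L E" and e: "{p, q} \<in> E"
  shows "real (deg E p - 1) * measure_pmf.expectation (Y_from_center U L E rk (card E) p q) cost
    \<le> 7 * real (deg E p - 1) + 4 * real (deg E p + deg E q - 2)"
  using expected_cost_Y_from_center[OF b e] sum_Z_rounds_le[OF b e] card_nbrs_Diff[OF e]
  by (simp add: sum.distrib flip: sum_distrib_left)

lemma expected_cost_Y_sample_le:
  assumes b: "bipartite_graph V U L E" and e: "{u, v} \<in> E"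
  shows "measure_pmf.expectation (Y_sample U L E rk (card E) u v) cost \<le> 15"
proof (cases "deg E u + deg E v - 2 = 0")
  case True
  then show ?thesis by (simp add: Y_sample_eq)
next
  case False
  have e': "{v, u} \<in> E" using e by (simp add: insert_commute)
  define de where "de = real (deg E u + deg E v - 2)"
  have de_split: "de = real (deg E u - 1) + real (deg E v - 1)"
    using deg_pos[OF b e] deg_pos[OF b e'] by (simp add: de_def of_nat_diff)
  have "de > 0" using False by (simp add: de_def)
  let ?E = "\<lambda>p q. measure_pmf.expectation (Y_from_center U L E rk (card E) p q) cost"
  define P where "P = real (deg E u - 1) / de"
  have "0 \<le> P" "P \<le> 1" using de_split \<open>de > 0\<close> by (auto simp: P_def)
  have one_minus_P: "1 - P = real (deg E v - 1) / de"
    using de_split \<open>de > 0\<close> by (simp add: P_def field_simps)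
  have Y_bernoulli: "Y_sample U L E rk (card E) u v = bind_pmf (bernoulli_pmf P)
      (\<lambda>b. if b then Y_from_center U L E rk (card E) u v else Y_from_center U L E rk (card E) v u)"
    using False by (simp add: Y_sample_eq P_def de_def)
  have "measure_pmf.expectation (Y_sample U L E rk (card E) u v) cost =
      P * ?E u v + (1 - P) * ?E v u"
    unfolding Y_bernoulli using \<open>0 \<le> P\<close> \<open>P \<le> 1\<close>
    by (subst pmf_expectation_bind[of UNIV]) (auto simp: finite_set_Y_from_center[OF b] UNIV_bool)
  also have "\<dots> = (real (deg E u - 1) * ?E u v + real (deg E v - 1) * ?E v u) / de"
    unfolding one_minus_P by (simp add: P_def add_divide_distrib)
  also have "\<dots> \<le> (7 * real (deg E u - 1) + 4 * de + (7 * real (deg E v - 1) + 4 * de)) / de"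
    using weighted_expected_cost_Y_from_center_le[OF b e, of rk]
      weighted_expected_cost_Y_from_center_le[OF b e', of rk] \<open>de > 0\<close>
    by (intro divide_right_mono add_mono) (simp_all add: de_def add.commute)
  also have "\<dots> = 15" using de_split \<open>de > 0\<close> by (simp add: field_simps)
  finally show ?thesis .
qed

lemma expected_cost_X_sample_le:
  assumes "bipartite_graph V U L E" and "{u, v} \<in> E"
  shows "measure_pmf.expectation (X_sample U L E rk (card E) s u v) cost \<le> 1 + 15 * real s"
proof -
  have "measure_pmf.expectation (X_sample U L E rk (card E) s u v) cost =
      1 + real s * measure_pmf.expectation (Y_sample U L E rk (card E) u v) cost"
    unfolding X_sample_def
    by (rule expected_cost_iter_pmf[OF finite_set_Y_sample[OF assms(1)]])
      (simp add: sum_list_map_cost)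
  also have "\<dots> \<le> 1 + real s * 15"
    using expected_cost_Y_sample_le[OF assms] by (intro add_left_mono mult_left_mono) auto
  finally show ?thesis by simp
qed

lemma expected_cost_Heavy_le:
  fixes bbar wbar eps :: real
  assumes "bipartite_graph V U L E" and "{u, v} \<in> E"
  defines "t \<equiv> nat \<lceil>48 * log 2 (2 * real (card E))\<rceil>"
    and "s \<equiv> nat \<lceil>12 * sqrt (real (card E)) * wbar / (eps ^ 2 * bbar)\<rceil>"
  shows "measure_pmf.expectation (Heavy U L E rk u v bbar wbar eps (card E)) cost
    \<le> 3 + 2 * real t + 15 * real t * real s"
proof (cases "wbar < (eps * bbar) powr (1/4) * real (deg E u + deg E v - 2)")
  case True
  then show ?thesis by (simp add: Heavy_def)
next
  case False
  then have "Heavy U L E rk u v bbar wbar eps (card E) =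
      map_pmf (\<lambda>xs. (median (map fst xs) > bbar powr (3/4) / eps powr (1/4),
                     2 + sum_q xs, 1 + t + sum_t xs))
        (iter_pmf t (X_sample U L E rk (card E) s u v))"
    unfolding Heavy_def Let_def t_def s_def by simp
  also have "measure_pmf.expectation \<dots> cost =
      3 + real t + real t * measure_pmf.expectation (X_sample U L E rk (card E) s u v) cost"
    by (rule expected_cost_iter_pmf[OF finite_set_X_sample[OF assms(1)]])
      (simp add: sum_list_map_cost)
  also have "\<dots> \<le> 3 + real t + real t * (1 + 15 * real s)"
    using expected_cost_X_sample_le[OF assms(1,2)] by (intro add_left_mono mult_left_mono) auto
  finally show ?thesis by (simp add: algebra_simps)
qed

lemma expectation_queries_time_le_cost:
  assumes "finite (set_pmf p)"
  shows "measure_pmf.expectation p (\<lambda>(_, q, _). real q) \<le> measure_pmf.expectation p cost"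
    and "measure_pmf.expectation p (\<lambda>(_, _, t). real t) \<le> measure_pmf.expectation p cost"
  using assms by (auto intro!: integral_mono integrable_measure_pmf_finite simp: cost_def)

lemma ceiling_log_le_ln:
  assumes "1 \<le> m" and "m \<le> n\<^sup>2"
  shows "real (nat \<lceil>48 * log 2 (2 * real m)\<rceil>) \<le> 144 * (1 + ln (real n))"
proof -
  have "1 \<le> real n" using assms by (cases n) auto
  have "log 2 (real m) \<le> log 2 (real n ^ 2)"
    using assms \<open>1 \<le> real n\<close> by (simp flip: of_nat_power)
  also have "\<dots> = 2 * (ln (real n) / ln 2)"
    using \<open>1 \<le> real n\<close> by (simp add: ln_realpow log_def)
  also have "\<dots> \<le> 2 * (ln (real n) / (2/3))"
    using ln2_ge_two_thirds \<open>1 \<le> real n\<close> by (intro mult_left_mono divide_left_mono) auto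
  finally have "log 2 (real m) \<le> 3 * ln (real n)" by simp
  moreover have "log 2 (2 * real m) = 1 + log 2 (real m)" "0 \<le> log 2 (real m)"
    using assms by (simp_all add: log_mult)
  ultimately show ?thesis
    using of_int_ceiling_le_add_one[of "48 * log 2 (2 * real m)"] \<open>1 \<le> real n\<close> by simp
qed

lemma heavy_cost_arith:
  fixes t s x lg eps :: real
  assumes "0 \<le> t" "t \<le> 144 * lg" "0 \<le> s" "s \<le> 12 * x / eps\<^sup>2 + 1"
    and "1 \<le> lg" "0 \<le> x" "0 < eps" "eps \<le> 1"
  shows "3 + 2 * t + 15 * t * s \<le> 30000 * (x + 1) * lg\<^sup>2 * (1 / eps)\<^sup>2"
proof -
  define y where "y = (x + 1) / eps\<^sup>2"
  have "eps\<^sup>2 \<le> 1" using assms by (simp add: power_le_one)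
  then have "1 \<le> y" using assms by (simp add: y_def le_divide_eq)
  have "x / eps\<^sup>2 \<le> y" using assms by (simp add: y_def divide_right_mono)
  then have "s \<le> 13 * y" using assms \<open>1 \<le> y\<close> by simp
  have "t * s \<le> (144 * lg) * (13 * y)" using assms \<open>s \<le> 13 * y\<close> by (intro mult_mono) auto
  moreover have "lg * y \<le> lg\<^sup>2 * y" "lg \<le> lg * y" "1 \<le> lg"
    using assms \<open>1 \<le> y\<close> by (auto simp: power2_eq_square)
  ultimately have "3 + 2 * t + 15 * t * s \<le> 30000 * (lg\<^sup>2 * y)" using assms by linarith
  also have "\<dots> = 30000 * (x + 1) * lg\<^sup>2 * (1 / eps)\<^sup>2" by (simp add: y_def power_divide)
  finally show ?thesis .
qed

lemma expected_cost_Heavy_bound: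
  fixes bbar wbar eps :: real
  assumes b: "bipartite_graph V U L E" and e: "{u, v} \<in> E"
    and "0 < bbar" "0 \<le> wbar" "0 < eps" "eps < 1"
  shows "measure_pmf.expectation (Heavy U L E rk u v bbar wbar eps (card E)) cost \<le>
    30000 * (wbar * sqrt (real (card E)) / bbar + 1) * (1 + ln (real (card V)))\<^sup>2 * (1 / eps)\<^sup>2"
proof -
  define t where "t = nat \<lceil>48 * log 2 (2 * real (card E))\<rceil>"
  define s where "s = nat \<lceil>12 * sqrt (real (card E)) * wbar / (eps ^ 2 * bbar)\<rceil>"
  define x where "x = wbar * sqrt (real (card E)) / bbar"
  have "1 \<le> card E" using card_edges_pos[OF b e] by simp
  have "1 \<le> card V" using card_edges_le[OF b] \<open>1 \<le> card E\<close> by (cases "card V") auto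
  have "measure_pmf.expectation (Heavy U L E rk u v bbar wbar eps (card E)) cost
      \<le> 3 + 2 * real t + 15 * real t * real s"
    unfolding t_def s_def by (rule expected_cost_Heavy_le[OF b e])
  also have "\<dots> \<le> 30000 * (x + 1) * (1 + ln (real (card V)))\<^sup>2 * (1 / eps)\<^sup>2"
  proof (rule heavy_cost_arith)
    show "real t \<le> 144 * (1 + ln (real (card V)))"
      using \<open>1 \<le> card E\<close> card_edges_le[OF b] unfolding t_def by (rule ceiling_log_le_ln)
    show "real s \<le> 12 * x / eps\<^sup>2 + 1"
      using of_int_ceiling_le_add_one[of "12 * x / eps\<^sup>2"] assms(3,4)
      by (simp add: s_def x_def mult_ac)
  qed (use \<open>1 \<le> card V\<close> assms(3-6) in \<open>auto simp: x_def\<close>)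
  finally show ?thesis by (simp add: x_def)
qed

theorem lemma8:
  shows "\<exists>C (k::nat). C > 0 \<and>
    (\<forall>(V::nat set) U L E rk u v bbar wbar eps.
       bipartite_graph V U L E \<and> inj_on rk V \<and> {u, v} \<in> E \<and>
       bbar > 0 \<and> 0 < eps \<and> eps < 1 \<and>
       real (wedges V E) / 6 \<le> wbar \<and> wbar \<le> 6 * real (wedges V E) \<longrightarrow>
       (let m = card E; n = card V;
            H = Heavy U L E rk u v bbar wbar eps m;
            B = C * (wbar * sqrt (real m) / bbar + 1) * (1 + ln (real n)) ^ k * (1 / eps) ^ k in
        measure_pmf.expectation H (\<lambda>(_, q, _). real q) \<le> B \<and>
        measure_pmf.expectation H (\<lambda>(_, _, t). real t) \<le> B))"
  \<comment> \<open>Of the hypotheses on rk and wbar only wbar \<ge> 0 matters for the cost.\<close>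
  by (intro exI[of _ "30000::real"] exI[of _ "2::nat"] conjI[OF zero_less_numeral] allI impI,
      unfold Let_def,
      intro conjI order.trans[OF _ expected_cost_Heavy_bound])
    (auto intro: expectation_queries_time_le_cost finite_set_Heavy)

end
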